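(* Let $\mathfrak{g}$ be a finite-dimensional real solvable Lie algebra equipped with an invariant scalar product $\langle\cdot,\cdot\rangle$ of Lorentzian signature (Witt index $1$) which is Einstein. Then $\mathfrak{g}$ is abelian.
   Context: A scalar product is a non-degenerate symmetric bilinear form; it is invariant if $\langle [x,y_1],y_2\rangle=-\langle y_1,[x,y_2]\rangle$ for all $x,y_1,y_2\in\mathfrak{g}$. It is Einstein if the bi-invariant metric on a connected Lie group with Lie algebra $\mathfrak{g}$ obtained by left translation of $\langle\cdot,\cdot\rangle$ is Einstein ($\mathrm{Ric}=\lambda\mathtt{g}$); for solvable $\mathfrak{g}$ this is equivalent to the vanishing of the Killing form. *)

theory Defs
  imports "HOL-Analysis.Analysis"
begin

definition lie_algebra :: "('a::euclidean_space \<Rightarrow> 'a \<Rightarrow> 'a) \<Rightarrow> bool" where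
  "lie_algebra br \<longleftrightarrow> bilinear br
     \<and> (\<forall>x. br x x = 0)
     \<and> (\<forall>x y z. br x (br y z) + br y (br z x) + br z (br x y) = 0)"

fun derived_series :: "('a::euclidean_space \<Rightarrow> 'a \<Rightarrow> 'a) \<Rightarrow> nat \<Rightarrow> 'a set" where
  "derived_series br 0 = UNIV"
| "derived_series br (Suc k) =
     span {br x y | x y. x \<in> derived_series br k \<and> y \<in> derived_series br k}"

definition solvable_lie :: "('a::euclidean_space \<Rightarrow> 'a \<Rightarrow> 'a) \<Rightarrow> bool" where
  "solvable_lie br \<longleftrightarrow> (\<exists>k. derived_series br k = {0})"

definition abelian_lie :: "('a::euclidean_space \<Rightarrow> 'a \<Rightarrow> 'a) \<Rightarrow> bool" where
  "abelian_lie br \<longleftrightarrow> (\<forall>x y. br x y = 0)"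

definition lie_scalar_product :: "('a::euclidean_space \<Rightarrow> 'a \<Rightarrow> real) \<Rightarrow> bool" where
  "lie_scalar_product sp \<longleftrightarrow> bilinear sp
     \<and> (\<forall>x y. sp x y = sp y x)
     \<and> (\<forall>x. (\<forall>y. sp x y = 0) \<longrightarrow> x = 0)"

definition invariant_form ::
  "('a::euclidean_space \<Rightarrow> 'a \<Rightarrow> 'a) \<Rightarrow> ('a \<Rightarrow> 'a \<Rightarrow> real) \<Rightarrow> bool" where
  "invariant_form br sp \<longleftrightarrow> (\<forall>x y1 y2. sp (br x y1) y2 = - sp y1 (br x y2))"

definition witt_index :: "('a::euclidean_space \<Rightarrow> 'a \<Rightarrow> real) \<Rightarrow> nat" where
  "witt_index sp = Max {dim V | V. subspace V \<and> (\<forall>x\<in>V. \<forall>y\<in>V. sp x y = 0)}"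

definition trace_map :: "('a::euclidean_space \<Rightarrow> 'a) \<Rightarrow> real" where
  "trace_map f = (\<Sum>b\<in>Basis. f b \<bullet> b)"

definition killing_form ::
  "('a::euclidean_space \<Rightarrow> 'a \<Rightarrow> 'a) \<Rightarrow> 'a \<Rightarrow> 'a \<Rightarrow> real" where
  "killing_form br x y = trace_map (\<lambda>z. br x (br y z))"

text \<open>Einstein: the bi-invariant metric induced by sp has Ric = lambda g.  For a
bi-invariant metric on a Lie group, Ric(x,y) = -1/4 B(x,y) with B the Killing form, so
this is the condition that the Killing form is a scalar multiple of sp.\<close>
definition einstein_form ::
  "('a::euclidean_space \<Rightarrow> 'a \<Rightarrow> 'a) \<Rightarrow> ('a \<Rightarrow> 'a \<Rightarrow> real) \<Rightarrow> bool" where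
  "einstein_form br sp \<longleftrightarrow> (\<exists>c::real. \<forall>x y. - (1/4) * killing_form br x y = c * sp x y)"

end

theory Submission
  imports Defs
begin

text \<open>Let \<open>D = [\<g>, \<g>]\<close>; by invariance \<open>D\<^sup>\<bottom>\<close> is central. If \<open>D \<inter> D\<^sup>\<bottom> = 0\<close>, then
  \<open>\<g> = D \<oplus> D\<^sup>\<bottom>\<close>, so \<open>D = [D, D]\<close> and solvability forces \<open>D = 0\<close>. Otherwise there is a
  nonzero central null vector \<open>e \<in> D\<close>; since \<open>ad e = 0\<close>, the Einstein condition makes the Killing
  form vanish. In Lorentzian signature \<open>e\<^sup>\<bottom>\<close> is semidefinite with null vectors only in \<open>\<real>e\<close>.
  Computing \<open>tr (ad x)\<^sup>2\<close> in a frame \<open>e, u, B\<close> with \<open>B\<close> an orthonormal basis of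
  \<open>{e, u}\<^sup>\<bottom>\<close> gives \<open>\<plusminus>\<Sum>\<^sub>b \<langle>[x, b], [x, b]\<rangle> = 0\<close>, whence all \<open>[x, b]\<close>, and then all brackets,
  lie in \<open>\<real>e\<close>. Pairing with a \<open>w\<close> with \<open>\<langle>e, w\<rangle> \<noteq> 0\<close> and using invariance kills them.\<close>

lemma bilinear_sum_left:
  "bilinear h \<Longrightarrow> h (\<Sum>v\<in>V. g v) y = (\<Sum>v\<in>V. h (g v) y)"
  by (induction V rule: infinite_finite_induct) (auto simp: bilinear_ladd bilinear_lzero)

lemma bilinear_sum_right:
  "bilinear h \<Longrightarrow> h y (\<Sum>v\<in>V. g v) = (\<Sum>v\<in>V. h y (g v))"
  by (induction V rule: infinite_finite_induct) (auto simp: bilinear_radd bilinear_rzero)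

lemma dual_system_coordinates:
  fixes q :: "'a::real_vector \<Rightarrow> 'a \<Rightarrow> real"
  assumes q: "bilinear q" and V: "finite V" "y \<in> span V"
    and dual: "\<And>v w. v \<in> V \<Longrightarrow> w \<in> V \<Longrightarrow> q v (d w) = (if v = w then 1 else 0)"
  shows "y = (\<Sum>v\<in>V. q y (d v) *\<^sub>R v)"
proof -
  obtain c where c: "y = (\<Sum>v\<in>V. c v *\<^sub>R v)"
    using V span_finite by auto
  have "q y (d w) = c w" if "w \<in> V" for w
  proof -
    have "q y (d w) = (\<Sum>v\<in>V. c v * q v (d w))"
      unfolding c by (simp add: bilinear_sum_left[OF q] bilinear_lmul[OF q])
    also have "\<dots> = (\<Sum>v\<in>V. if v = w then c v else 0)"
      by (rule sum.cong) (auto simp: dual that)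
    finally show ?thesis using V that by simp
  qed
  then show ?thesis by (simp add: c)
qed

lemma trace_map_dual_system:
  fixes q :: "'a::euclidean_space \<Rightarrow> 'a \<Rightarrow> real"
  assumes q: "bilinear q" and V: "finite V" "\<And>y. y \<in> span V"
    and dual: "\<And>v w. v \<in> V \<Longrightarrow> w \<in> V \<Longrightarrow> q v (d w) = (if v = w then 1 else 0)"
    and f: "linear f"
  shows "trace_map f = (\<Sum>v\<in>V. q (f v) (d v))"
proof -
  have "trace_map f = (\<Sum>b\<in>Basis. f (\<Sum>v\<in>V. q b (d v) *\<^sub>R v) \<bullet> b)"
    unfolding trace_map_def using dual_system_coordinates[OF q V(1) V(2) dual] by metis
  also have "\<dots> = (\<Sum>v\<in>V. \<Sum>b\<in>Basis. q b (d v) * (f v \<bullet> b))"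
    by (simp add: linear_sum[OF f] linear_scale[OF f] inner_sum_left sum.swap[of _ Basis])
  also have "\<dots> = (\<Sum>v\<in>V. q (\<Sum>b\<in>Basis. (f v \<bullet> b) *\<^sub>R b) (d v))"
    by (simp add: bilinear_sum_left[OF q] bilinear_lmul[OF q] mult.commute)
  also have "\<dots> = (\<Sum>v\<in>V. q (f v) (d v))"
    by (simp add: euclidean_representation)
  finally show ?thesis .
qed

lemma positive_form_orthonormal_basis:
  fixes q :: "'a::euclidean_space \<Rightarrow> 'a \<Rightarrow> real"
  assumes q: "bilinear q" "\<And>x y. q x y = q y x"
    and E: "subspace E" "\<And>v. v \<in> E \<Longrightarrow> v \<noteq> 0 \<Longrightarrow> q v v > 0"
  obtains B where "finite B" "B \<subseteq> E" "E \<subseteq> span B"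
    "\<forall>x\<in>B. \<forall>y\<in>B. q x y = (if x = y then 1 else 0)"
  using E
proof (induction "dim E" arbitrary: E thesis rule: less_induct)
  case less
  show ?case
  proof (cases "E \<subseteq> {0}")
    case True
    then show ?thesis by (intro less.prems(1)[of "{}"]) auto
  next
    case False
    then obtain v where v: "v \<in> E" "v \<noteq> 0" by auto
    define v' where "v' = (1 / sqrt (q v v)) *\<^sub>R v"
    have v'E: "v' \<in> E" using less.prems(2) v(1) by (simp add: v'_def subspace_scale)
    have qv': "q v' v' = 1"
      using less.prems(3)[OF v]
      by (simp add: v'_def bilinear_lmul[OF q(1)] bilinear_rmul[OF q(1)] real_sqrt_mult[symmetric])
    define E' where "E' = {y \<in> E. q v' y = 0}"
    have E': "subspace E'"
      using less.prems(2) unfolding E'_def subspace_def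
      by (auto simp: bilinear_radd[OF q(1)] bilinear_rmul[OF q(1)] bilinear_rzero[OF q(1)])
    have "v' \<notin> E'" using qv' by (simp add: E'_def)
    then have "E' \<subset> E" using v'E by (auto simp: E'_def)
    then have "dim E' < dim E"
      using E' less.prems(2) by (intro dim_psubset) (simp add: span_eq_iff[THEN iffD2])
    then obtain B' where B': "finite B'" "B' \<subseteq> E'" "E' \<subseteq> span B'"
      "\<forall>x\<in>B'. \<forall>y\<in>B'. q x y = (if x = y then 1 else 0)"
      using less.hyps[of E'] E' less.prems(3) by (auto simp: E'_def)
    have "y \<in> span (insert v' B')" if "y \<in> E" for y
    proof -
      have "y - q v' y *\<^sub>R v' \<in> E'"
        using that v'E less.prems(2) qv'
        by (simp add: E'_def subspace_diff subspace_scale bilinear_rsub[OF q(1)] bilinear_rmul[OF q(1)])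
      then have "y - q v' y *\<^sub>R v' \<in> span (insert v' B')"
        using B'(3) span_mono[of B' "insert v' B'"] by auto
      then have "(y - q v' y *\<^sub>R v') + q v' y *\<^sub>R v' \<in> span (insert v' B')"
        by (rule span_add) (simp add: span_base span_scale)
      then show ?thesis by simp
    qed
    moreover have "\<forall>x\<in>insert v' B'. \<forall>y\<in>insert v' B'. q x y = (if x = y then 1 else 0)"
      using B'(2,4) qv' q(2) by (auto simp: E'_def)
    ultimately show ?thesis
      using B'(1,2) v'E by (intro less.prems(1)[of "insert v' B'"]) (auto simp: E'_def)
  qed
qed

lemma abelian_if_solvable_commutator_perfect:
  fixes br :: "'a::euclidean_space \<Rightarrow> 'a \<Rightarrow> 'a"
  defines "D \<equiv> derived_series br (Suc 0)"
  assumes solvable: "solvable_lie br"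
    and perfect: "D \<subseteq> span {br x y | x y. x \<in> D \<and> y \<in> D}"
  shows "abelian_lie br"
proof -
  have stable: "derived_series br (Suc k) = D" for k
  proof (induction k)
    case (Suc k)
    have "span {br x y | x y. x \<in> D \<and> y \<in> D} \<subseteq> D"
      unfolding D_def by (intro span_minimal) (auto intro: span_base)
    then show ?case using Suc perfect by (simp add: D_def)
  qed (simp add: D_def)
  obtain k where "derived_series br k = {0}"
    using solvable by (auto simp: solvable_lie_def)
  then have "D = {0} \<or> (UNIV :: 'a set) = {0}"
    using stable by (cases k) auto
  moreover have "br x y \<in> D" for x y
    by (auto simp: D_def intro: span_base)
  ultimately show ?thesis
    by (auto simp: abelian_lie_def)
qed

locale nondegenerate_form =
  fixes sp :: "'a::euclidean_space \<Rightarrow> 'a \<Rightarrow> real"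
  assumes scalar_product: "lie_scalar_product sp"
begin

lemma sp_bilinear: "bilinear sp"
  using scalar_product by (simp add: lie_scalar_product_def)

lemma sp_sym: "sp x y = sp y x"
  using scalar_product by (simp add: lie_scalar_product_def)

lemma sp_nondegenerate: "(\<And>y. sp x y = 0) \<Longrightarrow> x = 0"
  using scalar_product by (simp add: lie_scalar_product_def)

lemmas sp_linear_simps =
  bilinear_ladd[OF sp_bilinear] bilinear_radd[OF sp_bilinear]
  bilinear_lmul[OF sp_bilinear] bilinear_rmul[OF sp_bilinear]
  bilinear_lsub[OF sp_bilinear] bilinear_rsub[OF sp_bilinear]
  bilinear_lneg[OF sp_bilinear] bilinear_rneg[OF sp_bilinear]
  bilinear_lzero[OF sp_bilinear] bilinear_rzero[OF sp_bilinear]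

lemma sp_combination_self:
  "sp (s *\<^sub>R a + t *\<^sub>R c) (s *\<^sub>R a + t *\<^sub>R c) = s * s * sp a a + 2 * s * t * sp a c + t * t * sp c c"
  using sp_sym[of c a] by (simp add: sp_linear_simps algebra_simps)

definition riesz :: "'a \<Rightarrow> 'a" where
  "riesz x = (\<Sum>b\<in>Basis. sp x b *\<^sub>R b)"

lemma inner_riesz: "riesz x \<bullet> y = sp x y"
proof -
  have "sp x y = sp x (\<Sum>b\<in>Basis. (y \<bullet> b) *\<^sub>R b)"
    by (simp add: euclidean_representation)
  also have "\<dots> = (\<Sum>b\<in>Basis. sp x b * (b \<bullet> y))"
    by (simp add: bilinear_sum_right[OF sp_bilinear] sp_linear_simps inner_commute mult.commute)
  also have "\<dots> = riesz x \<bullet> y"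
    by (simp add: riesz_def inner_sum_left)
  finally show ?thesis by simp
qed

lemma linear_riesz: "linear riesz"
  by (rule linearI)
    (simp_all add: riesz_def sp_linear_simps scaleR_add_left sum.distrib scaleR_sum_right)

lemma inj_riesz: "inj riesz"
proof (rule injI)
  fix x y assume "riesz x = riesz y"
  then have "sp (x - y) w = 0" for w
    using inner_riesz[of x w] inner_riesz[of y w] by (simp add: sp_linear_simps)
  then show "x = y" using sp_nondegenerate[of "x - y"] by simp
qed

lemma dim_orthogonal_complement:
  assumes "subspace W"
  shows "dim {z. \<forall>w\<in>W. sp z w = 0} + dim W = DIM('a)"
proof -
  let ?Z = "{z. \<forall>w\<in>W. sp z w = 0}"
  have "riesz ` ?Z = {y. \<forall>w\<in>W. orthogonal w y}"
  proof
    show "riesz ` ?Z \<subseteq> {y. \<forall>w\<in>W. orthogonal w y}"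
      by (auto simp: orthogonal_def inner_commute[of _ "riesz _"] inner_riesz)
    show "{y. \<forall>w\<in>W. orthogonal w y} \<subseteq> riesz ` ?Z"
    proof
      fix y assume y: "y \<in> {y. \<forall>w\<in>W. orthogonal w y}"
      obtain z where z: "y = riesz z"
        using linear_inj_imp_surj[OF linear_riesz inj_riesz] by (metis surjD)
      then show "y \<in> riesz ` ?Z"
        using y by (auto simp: orthogonal_def inner_commute[of _ "riesz _"] inner_riesz)
    qed
  qed
  moreover have "dim (riesz ` ?Z) = dim ?Z"
    using inj_riesz by (intro dim_image_eq[OF linear_riesz]) (auto intro: inj_on_subset)
  ultimately show ?thesis
    using dim_subspace_orthogonal_to_vectors[of W UNIV] assms by simp
qed

lemma dim_isotropic_le_witt_index:
  assumes "subspace V" "\<And>x y. x \<in> V \<Longrightarrow> y \<in> V \<Longrightarrow> sp x y = 0"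
  shows "dim V \<le> witt_index sp"
proof -
  let ?M = "{dim V | V. subspace V \<and> (\<forall>x\<in>V. \<forall>y\<in>V. sp x y = 0)}"
  have "?M \<subseteq> {..DIM('a)}"
    using dim_subset_UNIV by auto
  then have "finite ?M" by (rule finite_subset) simp
  moreover have "dim V \<in> ?M" using assms by blast
  ultimately show ?thesis by (simp add: witt_index_def)
qed

lemma exists_null_partner:
  assumes "e \<noteq> 0" "sp e e = 0"
  obtains u where "sp e u = 1" "sp u u = 0"
proof -
  obtain w where w: "sp e w \<noteq> 0" using sp_nondegenerate assms(1) by blast
  define u0 where "u0 = (1 / sp e w) *\<^sub>R w"
  have eu0: "sp e u0 = 1" using w by (simp add: u0_def sp_linear_simps)
  define u where "u = 1 *\<^sub>R u0 + (- sp u0 u0 / 2) *\<^sub>R e"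
  have "sp e u = 1" using eu0 assms(2) by (simp add: u_def sp_linear_simps)
  moreover have "sp u u = 0"
    unfolding u_def sp_combination_self using eu0 assms(2) sp_sym[of u0 e] by simp
  ultimately show thesis by (rule that)
qed

text \<open>\<open>B\<close> is an \<open>\<epsilon> \<cdot> sp\<close>-orthonormal basis of \<open>{e, u}\<^sup>\<bottom>\<close>: the last conjunct says that
  \<open>B\<close> spans it.\<close>
definition null_frame :: "real \<Rightarrow> 'a \<Rightarrow> 'a \<Rightarrow> 'a set \<Rightarrow> bool" where
  "null_frame \<epsilon> e u B \<longleftrightarrow> sp e e = 0 \<and> sp u u = 0 \<and> sp e u = 1 \<and> finite B
     \<and> (\<forall>b\<in>B. sp b e = 0 \<and> sp b u = 0)
     \<and> (\<forall>x\<in>B. \<forall>y\<in>B. \<epsilon> * sp x y = (if x = y then 1 else 0))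
     \<and> (\<forall>y. y - sp y u *\<^sub>R e - sp y e *\<^sub>R u \<in> span B)"

lemma trace_map_null_frame:
  assumes frame: "null_frame \<epsilon> e u B" and f: "linear f"
  shows "trace_map f = sp (f e) u + sp (f u) e + \<epsilon> * (\<Sum>b\<in>B. sp (f b) b)"
proof -
  have ee: "sp e e = 0" and uu: "sp u u = 0" and eu: "sp e u = 1" "sp u e = 1"
    and B: "finite B" "\<And>b. b \<in> B \<Longrightarrow> sp b e = 0 \<and> sp e b = 0 \<and> sp b u = 0 \<and> sp u b = 0"
    and onB: "\<And>x y. x \<in> B \<Longrightarrow> y \<in> B \<Longrightarrow> sp x (\<epsilon> *\<^sub>R y) = (if x = y then 1 else 0)"
    and decomp: "\<And>y. y - sp y u *\<^sub>R e - sp y e *\<^sub>R u \<in> span B"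
    using frame sp_sym by (auto simp: null_frame_def sp_linear_simps)
  have distinct: "e \<notin> B" "u \<notin> B" "e \<noteq> u"
    using B(2) eu ee by force+
  define V where "V = insert e (insert u B)"
  define d where "d v = (if v = e then u else if v = u then e else \<epsilon> *\<^sub>R v)" for v
  have dual: "sp v (d w) = (if v = w then 1 else 0)" if "v \<in> V" "w \<in> V" for v w
    using that distinct ee uu eu B(2) onB[of v w]
    by (auto simp: V_def d_def sp_linear_simps)
  have spanning: "y \<in> span V" for y
  proof -
    have "y - sp y u *\<^sub>R e - sp y e *\<^sub>R u \<in> span V"
      using decomp span_mono[of B V] by (auto simp: V_def)
    then have "(y - sp y u *\<^sub>R e - sp y e *\<^sub>R u) + sp y u *\<^sub>R e + sp y e *\<^sub>R u \<in> span V"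
      by (intro span_add) (auto simp: V_def intro: span_scale span_base)
    then show ?thesis by simp
  qed
  have "trace_map f = (\<Sum>v\<in>V. sp (f v) (d v))"
    by (rule trace_map_dual_system[OF sp_bilinear _ spanning dual f]) (simp add: V_def B(1))
  also have "\<dots> = sp (f e) u + sp (f u) e + (\<Sum>b\<in>B. sp (f b) (\<epsilon> *\<^sub>R b))"
    using distinct B(1) by (auto simp: V_def d_def intro!: sum.cong)
  finally show ?thesis
    by (simp add: sp_linear_simps sum_distrib_left)
qed

end

locale lorentzian_form = nondegenerate_form +
  assumes witt_index_one: "witt_index sp = 1"
begin

lemma isotropic_orthogonal_in_null_line:
  assumes e: "e \<noteq> 0" "sp e e = 0" and v: "sp e v = 0" "sp v v = 0"
  shows "v \<in> span {e}"
proof (rule ccontr)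
  assume v_notin: "v \<notin> span {e}"
  then have "v \<noteq> e" by (auto intro: span_base)
  have "independent {v, e}"
    using v_notin e(1) by (simp add: independent_insert \<open>v \<noteq> e\<close>)
  then have "dim (span {v, e}) = 2"
    using \<open>v \<noteq> e\<close> by (simp add: dim_eq_card_independent)
  moreover have "dim (span {v, e}) \<le> witt_index sp"
  proof (rule dim_isotropic_le_witt_index)
    have zero: "bilinear (\<lambda>x y::'a. 0::real)"
      by (auto simp: bilinear_def intro: linearI)
    fix x y assume "x \<in> span {v, e}" "y \<in> span {v, e}"
    then show "sp x y = 0"
      using bilinear_eq[OF sp_bilinear zero, of "span {v, e}" "{v, e}" "span {v, e}" "{v, e}" x y]
        e v sp_sym[of v e] by auto
  qed simp
  ultimately show False using witt_index_one by simp
qed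

lemma orthogonal_to_null_not_indefinite:
  assumes e: "e \<noteq> 0" "sp e e = 0"
    and a: "sp a e = 0" "sp a a > 0" and b: "sp b e = 0" "sp b b < 0"
  shows False
proof -
  define b' where "b' = b - (sp a b / sp a a) *\<^sub>R a"
  have ab': "sp a b' = 0" "sp b' a = 0"
    using a(2) sp_sym[of a b] sp_sym[of b' a] by (simp_all add: b'_def sp_linear_simps)
  have b'e: "sp b' e = 0" using a(1) b(1) by (simp add: b'_def sp_linear_simps)
  have "sp b' b' = sp b b - (sp a b)\<^sup>2 / sp a a"
    using ab'(2) a(2) sp_sym[of a b]
    by (simp add: b'_def sp_linear_simps power2_eq_square)
  then have b'_neg: "sp b' b' < 0"
    using a(2) b(2) by (smt (verit) divide_nonneg_pos zero_le_power2)
  define w where "w = sqrt (- sp b' b') *\<^sub>R a + sqrt (sp a a) *\<^sub>R b'"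
  have "sp w w = 0"
    unfolding w_def sp_combination_self using ab' a(2) b'_neg by (simp add: real_sqrt_mult_self)
  moreover have "sp e w = 0"
    using a(1) b'e sp_sym[of e a] sp_sym[of e b'] by (simp add: w_def sp_linear_simps)
  ultimately have "w \<in> span {e}"
    by (rule isotropic_orthogonal_in_null_line[OF e, rotated])
  then obtain k where "w = k *\<^sub>R e" by (auto simp: span_singleton)
  then have "sp w a = 0" using a(1) sp_sym[of e a] by (simp add: sp_linear_simps)
  moreover have "sp w a = sqrt (- sp b' b') * sp a a"
    using ab'(2) by (simp add: w_def sp_linear_simps)
  ultimately show False using a(2) b'_neg by simp
qed

lemma orthogonal_to_null_semidefinite:
  assumes "e \<noteq> 0" "sp e e = 0"
  obtains \<epsilon> :: real where "\<epsilon> = 1 \<or> \<epsilon> = -1" "\<And>v. sp v e = 0 \<Longrightarrow> \<epsilon> * sp v v \<ge> 0"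
proof (cases "\<exists>a. sp a e = 0 \<and> sp a a > 0")
  case True
  then obtain a where a: "sp a e = 0" "sp a a > 0" by blast
  have "1 * sp v v \<ge> 0" if "sp v e = 0" for v
    using orthogonal_to_null_not_indefinite[OF assms a that] by fastforce
  then show thesis using that[of 1] by blast
next
  case False
  then show thesis using that[of "-1"] by (auto simp: not_less)
qed

lemma null_frame_exists:
  assumes e: "e \<noteq> 0" "sp e e = 0"
    and \<epsilon>: "\<epsilon> \<noteq> 0" "\<And>v. sp v e = 0 \<Longrightarrow> \<epsilon> * sp v v \<ge> 0"
  obtains u B where "null_frame \<epsilon> e u B"
proof -
  obtain u where u: "sp e u = 1" "sp u u = 0" using exists_null_partner e by blast
  define E where "E = {v. sp v e = 0 \<and> sp v u = 0}"
  have E: "subspace E"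
    unfolding subspace_def E_def by (auto simp: sp_linear_simps)
  have definite: "\<epsilon> * sp v v > 0" if v: "v \<in> E" "v \<noteq> 0" for v
  proof (rule ccontr)
    assume "\<not> \<epsilon> * sp v v > 0"
    then have "sp v v = 0" using \<epsilon> v(1) by (force simp: E_def)
    then have "v \<in> span {e}"
      using v(1) sp_sym[of e v] by (intro isotropic_orthogonal_in_null_line[OF e]) (auto simp: E_def)
    then obtain k where "v = k *\<^sub>R e" by (auto simp: span_singleton)
    then show False using v u(1) by (auto simp: E_def sp_linear_simps)
  qed
  have q: "bilinear (\<lambda>a b. \<epsilon> * sp a b)"
    unfolding bilinear_def by (auto intro!: linearI simp: sp_linear_simps algebra_simps)
  obtain B where B: "finite B" "B \<subseteq> E" "E \<subseteq> span B"
    "\<forall>x\<in>B. \<forall>y\<in>B. \<epsilon> * sp x y = (if x = y then 1 else 0)"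
    using positive_form_orthonormal_basis[OF q _ E definite] sp_sym by metis
  have "y - sp y u *\<^sub>R e - sp y e *\<^sub>R u \<in> E" for y
    using u e(2) sp_sym[of e u] by (simp add: E_def sp_linear_simps)
  then have "null_frame \<epsilon> e u B"
    using B u e(2) by (auto simp: null_frame_def E_def)
  then show thesis by (rule that)
qed

end

locale invariant_lie_form = nondegenerate_form sp
  for sp :: "'a::euclidean_space \<Rightarrow> 'a \<Rightarrow> real" +
  fixes br :: "'a \<Rightarrow> 'a \<Rightarrow> 'a"
  assumes lie: "lie_algebra br" and invariant: "invariant_form br sp"
begin

lemma br_bilinear: "bilinear br"
  using lie by (simp add: lie_algebra_def)

lemma br_self [simp]: "br x x = 0"
  using lie by (simp add: lie_algebra_def)

lemma br_linear: "linear (br x)"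
  using br_bilinear by (simp add: bilinear_def)

lemmas br_linear_simps =
  linear_add[OF br_linear] linear_diff[OF br_linear] linear_scale[OF br_linear]
  linear_0[OF br_linear]

lemma br_antisym: "br x y = - br y x"
proof -
  have "br x y + br y x = br (x + y) (x + y) - br x x - br y y"
    by (simp add: bilinear_ladd[OF br_bilinear] bilinear_radd[OF br_bilinear] del: br_self)
  then show ?thesis by (simp add: eq_neg_iff_add_eq_0)
qed

lemma sp_br_invariant: "sp (br x y) z = - sp y (br x z)"
  using invariant by (simp add: invariant_form_def)

abbreviation commutator :: "'a set" where
  "commutator \<equiv> derived_series br (Suc 0)"

abbreviation commutator_perp :: "'a set" where
  "commutator_perp \<equiv> {z. \<forall>w\<in>commutator. sp z w = 0}"

lemma br_in_commutator: "br x y \<in> commutator"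
  by (auto intro: span_base)

lemma commutator_perp_central:
  assumes "z \<in> commutator_perp"
  shows "br x z = 0"
proof (rule sp_nondegenerate)
  fix y
  show "sp (br x z) y = 0"
    using assms br_in_commutator by (simp add: sp_br_invariant)
qed

lemma einstein_killing_form_eq_0:
  assumes einstein: "einstein_form br sp" and z: "z \<noteq> 0" "\<And>x. br z x = 0"
  shows "killing_form br x y = 0"
proof -
  obtain c where c: "\<And>x y. - (1/4) * killing_form br x y = c * sp x y"
    using einstein by (auto simp: einstein_form_def)
  have "c * sp z y = 0" for y
    using c[of z y] z(2) by (simp add: killing_form_def trace_map_def)
  moreover obtain w where "sp z w \<noteq> 0"
    using sp_nondegenerate z(1) by blast
  ultimately have "c = 0" by auto
  then show ?thesis using c[of x y] by simp
qed

lemma abelian_if_brackets_in_line: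
  assumes "e \<noteq> 0" and line: "\<And>x y. br x y \<in> span {e}"
  shows "abelian_lie br"
proof -
  obtain w where w: "sp e w \<noteq> 0"
    using sp_nondegenerate assms(1) by blast
  have in_line: "br x y = (sp (br x y) w / sp e w) *\<^sub>R e" for x y
    using line[of x y] w by (auto simp: span_singleton sp_linear_simps)
  have "sp (br x w) w = 0" for x
    using sp_br_invariant[of x w w] sp_sym[of w "br x w"] by simp
  then have "br x w = 0" for x
    using in_line[of x w] by simp
  then have "sp (br x y) w = 0" for x y
    by (simp add: sp_br_invariant sp_linear_simps)
  then show ?thesis
    using in_line by (simp add: abelian_lie_def)
qed

lemma abelian_if_commutator_inter_perp_trivial:
  assumes solvable: "solvable_lie br" and trivial: "commutator \<inter> commutator_perp \<subseteq> {0}"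
  shows "abelian_lie br"
proof (rule abelian_if_solvable_commutator_perfect[OF solvable])
  let ?S = "{x + y | x y. x \<in> commutator \<and> y \<in> commutator_perp}"
  have sub: "subspace commutator" "subspace commutator_perp"
    by (simp, auto simp: subspace_def sp_linear_simps)
  have "commutator \<inter> commutator_perp = {0}"
    using trivial subspace_0[OF sub(1)] subspace_0[OF sub(2)] by blast
  then have "dim ?S = DIM('a)"
    using dim_sums_Int[OF sub] dim_orthogonal_complement[OF sub(1)] by simp
  then have "span ?S = UNIV"
    using dim_eq_full by auto
  then have S_UNIV: "?S = UNIV"
    by (simp only: span_eq_iff[THEN iffD2, OF subspace_sums[OF sub]])
  have decomposable: "\<exists>a c. z = a + c \<and> a \<in> commutator \<and> c \<in> commutator_perp" for z
    using UNIV_I[of z] unfolding S_UNIV[symmetric] mem_Collect_eq .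
  have "br x y \<in> {br a b | a b. a \<in> commutator \<and> b \<in> commutator}" for x y
  proof -
    obtain a c a' c' where decomp: "a \<in> commutator" "c \<in> commutator_perp" "x = a + c"
      "a' \<in> commutator" "c' \<in> commutator_perp" "y = a' + c'"
      using decomposable[of x] decomposable[of y] by blast
    have "br c z = 0" for z
      using commutator_perp_central[OF decomp(2), of z] br_antisym[of c z] by simp
    then have "br x y = br a a'"
      using commutator_perp_central[OF decomp(5)] decomp(3,6)
      by (simp add: bilinear_ladd[OF br_bilinear] bilinear_radd[OF br_bilinear])
    then show ?thesis using decomp(1,4) by (intro CollectI exI[of _ a] exI[of _ a']) simp
  qed
  then show "commutator \<subseteq> span {br x y | x y. x \<in> commutator \<and> y \<in> commutator}"
    by (auto intro!: span_mono)
qed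

end

locale lorentzian_invariant_lie = invariant_lie_form sp br + lorentzian_form sp
  for sp :: "'a::euclidean_space \<Rightarrow> 'a \<Rightarrow> real" and br
begin

lemma killing_form_self_null_frame:
  assumes frame: "null_frame \<epsilon> e u B" and central: "br x e = 0"
  shows "killing_form br x x = - \<epsilon> * (\<Sum>b\<in>B. sp (br x b) (br x b))"
proof -
  have "linear (\<lambda>z. br x (br x z))"
    by (rule linearI) (simp_all add: br_linear_simps)
  then have "killing_form br x x
      = sp (br x (br x e)) u + sp (br x (br x u)) e + \<epsilon> * (\<Sum>b\<in>B. sp (br x (br x b)) b)"
    unfolding killing_form_def by (rule trace_map_null_frame[OF frame])
  also have "\<dots> = - \<epsilon> * (\<Sum>b\<in>B. sp (br x b) (br x b))"
    using central by (simp add: sp_br_invariant sp_linear_simps br_linear_simps sum_negf)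
  finally show ?thesis .
qed

lemma brackets_in_null_line:
  assumes e: "e \<noteq> 0" "sp e e = 0" and central: "\<And>x. br x e = 0"
    and killing: "\<And>x. killing_form br x x = 0"
  shows "br x y \<in> span {e}"
proof -
  obtain \<epsilon> :: real where \<epsilon>: "\<epsilon> = 1 \<or> \<epsilon> = -1" "\<And>v. sp v e = 0 \<Longrightarrow> \<epsilon> * sp v v \<ge> 0"
    using orthogonal_to_null_semidefinite[OF e] by blast
  moreover have "\<epsilon> \<noteq> 0" using \<epsilon>(1) by auto
  ultimately obtain u B where frame: "null_frame \<epsilon> e u B"
    using null_frame_exists[OF e] by blast
  then have B: "finite B" and ue: "sp u e = 1"
    and decomp: "\<And>y. y - sp y u *\<^sub>R e - sp y e *\<^sub>R u \<in> span B"
    using sp_sym by (auto simp: null_frame_def)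
  have perp: "sp (br x v) e = 0" for x v
    using central by (simp add: sp_br_invariant sp_linear_simps)
  have null_line: "v \<in> span {e}" if "sp v e = 0" "sp v v = 0" for v
    using that sp_sym[of e v] by (intro isotropic_orthogonal_in_null_line[OF e]) simp_all
  have on_B: "br x b \<in> span {e}" if "b \<in> B" for x b
  proof -
    have "\<epsilon> * (\<Sum>b\<in>B. sp (br x b) (br x b)) = 0"
      using killing_form_self_null_frame[OF frame central] killing[of x] by simp
    then have "(\<Sum>b\<in>B. \<epsilon> * sp (br x b) (br x b)) = 0"
      by (simp only: sum_distrib_left)
    then have "\<forall>b\<in>B. \<epsilon> * sp (br x b) (br x b) = 0"
      by (rule sum_nonneg_eq_0_iff[OF B, THEN iffD1, rotated]) (rule \<epsilon>(2)[OF perp])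
    then have "\<epsilon> * sp (br x b) (br x b) = 0"
      using that by blast
    then show ?thesis
      using \<epsilon>(1) perp null_line by auto
  qed
  have on_span_B: "br x r \<in> span {e}" if "r \<in> span B" for x r
  proof -
    have "subspace {z. br x z \<in> span {e}}"
      by (rule real_vector.linear_subspace_linear_preimage[OF br_linear subspace_span])
    then show ?thesis
      using that on_B span_minimal[of B "{z. br x z \<in> span {e}}"] by blast
  qed
  have on_perp: "br x v \<in> span {e}" if "sp v e = 0" for x v
    using on_span_B[OF decomp[of v]] that central by (simp add: br_linear_simps)
  \<comment> \<open>\<open>u \<notin> e\<^sup>\<bottom>\<close>, so \<open>[x, u]\<close> is reached through \<open>[x, u] = - [u, x]\<close>.\<close>
  have "br x u \<in> span {e}" for x
  proof -
    have "sp (x - sp x e *\<^sub>R u) e = 0"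
      using ue by (simp add: sp_linear_simps)
    then have "br u x \<in> span {e}"
      using on_perp[of "x - sp x e *\<^sub>R u" u] by (simp add: br_linear_simps)
    then show ?thesis
      by (subst br_antisym) (rule span_neg)
  qed
  moreover have "sp (y - sp y e *\<^sub>R u) e = 0"
    using ue by (simp add: sp_linear_simps)
  moreover have "br x y = br x (y - sp y e *\<^sub>R u) + sp y e *\<^sub>R br x u"
    by (simp add: br_linear_simps)
  ultimately show ?thesis
    using on_perp by (simp add: span_add span_scale)
qed

lemma abelian_if_commutator_meets_perp:
  assumes "e \<in> commutator" "e \<in> commutator_perp" "e \<noteq> 0" and einstein: "einstein_form br sp"
  shows "abelian_lie br"
proof -
  have central: "br x e = 0" for x
    using commutator_perp_central[OF assms(2)] .
  have null: "sp e e = 0"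
    using assms(1,2) by blast
  have "br e x = 0" for x
    using central br_antisym[of e x] by simp
  then have "killing_form br x y = 0" for x y
    by (rule einstein_killing_form_eq_0[OF einstein assms(3)])
  then have "br x y \<in> span {e}" for x y
    using brackets_in_null_line[OF assms(3) null central] by blast
  then show ?thesis
    by (rule abelian_if_brackets_in_line[OF assms(3)])
qed

end

theorem corollary5p2:
  fixes br :: "'a::euclidean_space \<Rightarrow> 'a \<Rightarrow> 'a"
    and sp :: "'a \<Rightarrow> 'a \<Rightarrow> real"
  assumes "lie_algebra br"
    and "solvable_lie br"
    and "lie_scalar_product sp"
    and "invariant_form br sp"
    and "witt_index sp = 1"
    and "einstein_form br sp"
  shows "abelian_lie br"
proof -
  interpret lorentzian_invariant_lie sp br
    using assms by unfold_locales auto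
  show ?thesis
  proof (cases "\<exists>e. e \<in> commutator \<and> e \<in> commutator_perp \<and> e \<noteq> 0")
    case True
    then show ?thesis
      using abelian_if_commutator_meets_perp assms(6) by blast
  next
    case False
    then show ?thesis
      using abelian_if_commutator_inter_perp_trivial assms(2) by blast
  qed
qed

end
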